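(* Let $a, b$ be positive integers with $b \le 2a$, and let $T_{a,b} = \{C_{i,1} : 1 \le i \le 2a+1\} \cup \{C_{a+1,j} : 2 \le j \le b+1\}$, of size $n = 2a+b+1$. Then on the $n \times n$ board, $$\mathrm{cp}_{\mathrm{fixed}}(T_{a,b}) = \left\lceil \frac{2a+1}{2b+1} \right\rceil.$$
   Context: For integers $i,j$, $C_{i,j}$ denotes the unit square cell in column $i$ and row $j$ of the integer grid (columns numbered left to right, rows numbered top to bottom). A polyomino is a finite set of cells; its size is its number of cells. For a polyomino $\mathcal{P}$ of size $n$ the board is $\mathbb{B} = \{C_{i,j} : 1 \le i,j \le n\}$. The shift of $\mathcal{P}$ by integers $(c,d)$ is $\mathcal{P}+(c,d) = \{C_{x+c,y+d} : C_{x,y} \in \mathcal{P}\}$; a fixed copy of $\mathcal{P}$ is any shift of $\mathcal{P}$ (no rotations). A set of polyominoes is a valid arrangement if each is contained in $\mathbb{B}$ and they are pairwise disjoint. A fixed packing of $\mathcal{P}$ is a set of fixed copies of $\mathcal{P}$ forming a valid arrangement such that adding any further fixed copy of $\mathcal{P}$ yields an invalid arrangement. The clumsy fixed packing number $\mathrm{cp}_{\mathrm{fixed}}(\mathcal{P})$ is the minimum number of polyominoes in a fixed packing of $\mathcal{P}$ on the $n \times n$ board. *)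

theory Defs
  imports Complex_Main
begin

text \<open>A cell C_{i,j} is represented by the pair (i, j) :: int \<times> int
  (i = column, j = row). A polyomino is a finite set of cells.\<close>

type_synonym cell = "int \<times> int"

definition board :: "nat \<Rightarrow> cell set" where
  "board n = {1..int n} \<times> {1..int n}"

definition shift :: "cell set \<Rightarrow> int \<Rightarrow> int \<Rightarrow> cell set" where
  "shift P c d = (\<lambda>(x, y). (x + c, y + d)) ` P"

definition fixed_copy :: "cell set \<Rightarrow> cell set \<Rightarrow> bool" where
  "fixed_copy P Q \<longleftrightarrow> (\<exists>c d. Q = shift P c d)"

definition valid_arrangement :: "nat \<Rightarrow> cell set set \<Rightarrow> bool" where
  "valid_arrangement n S \<longleftrightarrow>
     (\<forall>Q\<in>S. Q \<subseteq> board n) \<and> (\<forall>Q\<in>S. \<forall>R\<in>S. Q \<noteq> R \<longrightarrow> Q \<inter> R = {})"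

definition fixed_packing :: "cell set \<Rightarrow> cell set set \<Rightarrow> bool" where
  "fixed_packing P S \<longleftrightarrow>
     (\<forall>Q\<in>S. fixed_copy P Q) \<and> valid_arrangement (card P) S \<and>
     (\<forall>Q. fixed_copy P Q \<and> Q \<notin> S \<longrightarrow> \<not> valid_arrangement (card P) (insert Q S))"

definition cp_fixed :: "cell set \<Rightarrow> nat" where
  "cp_fixed P = Min (card ` {S. fixed_packing P S})"

definition T_shape :: "nat \<Rightarrow> nat \<Rightarrow> cell set" where
  "T_shape a b = {(i, 1) | i. 1 \<le> i \<and> i \<le> 2 * int a + 1}
               \<union> {(int a + 1, j) | j. 2 \<le> j \<and> j \<le> int b + 1}"

end

theory Submission
  imports Defs
begin

(*
  A fixed copy of T_{a,b} lies on the board exactly when it is the shift by (c, d) with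
  0 <= c <= b and 0 <= d <= 2a.  Copies whose row offsets differ by more than b are
  disjoint, while copies whose column offsets differ by at most a and whose row offsets
  differ by at most b meet.  By maximality of a packing, every row offset in {0..2a} is
  therefore within b of the row offset of some copy, so the copies' intervals of radius b
  cover 2a + 1 integers and there are at least ceil((2a+1)/(2b+1)) of them.  Conversely,
  copies in the middle column b div 2 whose row offsets form a b-separated set whose
  b-neighbourhoods cover {0..2a} form a packing of exactly that size.
*)

lemma ceiling_of_nat_Suc_divide:
  fixes n q :: nat
  assumes "0 < q"
  shows "\<lceil>real (n + 1) / real q\<rceil> = int (n div q + 1)"
proof (rule ceiling_unique)
  have "n div q * q \<le> n" by simp
  then have "real (n div q) * real q < real (n + 1)"
    by (metis of_nat_less_iff of_nat_mult le_imp_less_Suc Suc_eq_plus1)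
  then show "real_of_int (int (n div q + 1)) - 1 < real (n + 1) / real q"
    using assms by (simp add: less_divide_eq)
  have "n + 1 \<le> (n div q + 1) * q"
    using dividend_less_div_times[OF assms, of n] by simp
  then have "real (n + 1) \<le> real (n div q + 1) * real q"
    by (metis of_nat_le_iff of_nat_mult)
  then show "real (n + 1) / real q \<le> real_of_int (int (n div q + 1))"
    using assms by (simp add: divide_le_eq)
qed

lemma interval_has_separated_cover:
  fixes N r :: nat
  obtains D :: "nat set"
  where "D \<subseteq> {..N}" "card D = N div (2 * r + 1) + 1"
    and "\<And>d e. d \<in> D \<Longrightarrow> e \<in> D \<Longrightarrow> d < e \<Longrightarrow> d + r < e"
    and "\<And>x. x \<le> N \<Longrightarrow> \<exists>d\<in>D. x \<le> d + r \<and> d \<le> x + r"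
proof -
  define q where "q = 2 * r + 1"
  define K where "K = N div q"
  define centre where "centre i = min (r + i * q) N" for i
  have separated: "centre i + r < centre j" if "i < j" "j \<le> K" for i j
  proof -
    have "i * q + q \<le> j * q"
      using mult_le_mono1[of "i + 1" j q] that(1) by simp
    moreover have "j * q \<le> N"
      using mult_le_mono1[OF that(2), of q] div_times_less_eq_dividend[of N q]
      unfolding K_def by linarith
    ultimately show ?thesis unfolding centre_def q_def by linarith
  qed
  have "strict_mono_on {..K} centre"
    by (rule strict_mono_onI) (use separated in fastforce)
  then have card: "card (centre ` {..K}) = K + 1"
    by (simp add: card_image strict_mono_on_imp_inj_on)
  show thesis
  proof
    show "centre ` {..K} \<subseteq> {..N}" unfolding centre_def by auto
    show "card (centre ` {..K}) = N div (2 * r + 1) + 1"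
      using card unfolding K_def q_def .
  next
    fix d e assume "d \<in> centre ` {..K}" "e \<in> centre ` {..K}" "d < e"
    then obtain i j where "d = centre i" "e = centre j" "i \<le> K" "j \<le> K"
      by auto
    with \<open>d < e\<close> separated[of j i] separated[of i j] show "d + r < e"
      by (cases i j rule: linorder_cases) auto
  next
    fix x assume "x \<le> N"
    define i where "i = x div q"
    have "i \<le> K" unfolding i_def K_def using div_le_mono[OF \<open>x \<le> N\<close>] .
    moreover have "x = i * q + x mod q"
      unfolding i_def by (rule div_mult_mod_eq[symmetric])
    moreover have "x mod q < q" unfolding q_def by simp
    ultimately have "x \<le> centre i + r \<and> centre i \<le> x + r"
      using \<open>x \<le> N\<close> unfolding centre_def q_def by linarith
    with \<open>i \<le> K\<close> show "\<exists>d\<in>centre ` {..K}. x \<le> d + r \<and> d \<le> x + r"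
      by blast
  qed
qed

lemma valid_arrangement_insert_iff:
  "valid_arrangement n (insert Q S) \<longleftrightarrow>
     valid_arrangement n S \<and> Q \<subseteq> board n \<and> (\<forall>R\<in>S. R \<noteq> Q \<longrightarrow> Q \<inter> R = {})"
  unfolding valid_arrangement_def disjnt_def[symmetric] by (auto intro: disjnt_sym)

lemma fixed_packing_meets_copy:
  assumes "fixed_packing P S" "fixed_copy P Q" "Q \<subseteq> board (card P)" "Q \<noteq> {}"
  shows "\<exists>R\<in>S. Q \<inter> R \<noteq> {}"
proof (cases "Q \<in> S")
  case True
  with \<open>Q \<noteq> {}\<close> show ?thesis by auto
next
  case False
  with assms(1,2) have "\<not> valid_arrangement (card P) (insert Q S)"
    unfolding fixed_packing_def by simp
  with assms(1,3) show ?thesis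
    unfolding fixed_packing_def valid_arrangement_insert_iff by meson
qed

lemma fixed_packingI:
  assumes "\<And>Q. Q \<in> S \<Longrightarrow> fixed_copy P Q"
    and "valid_arrangement (card P) S"
    and "\<And>Q. fixed_copy P Q \<Longrightarrow> Q \<subseteq> board (card P) \<Longrightarrow> \<exists>R\<in>S. Q \<inter> R \<noteq> {}"
  shows "fixed_packing P S"
  unfolding fixed_packing_def valid_arrangement_insert_iff
  using assms by (metis (full_types))

lemma finite_fixed_copies_in_board:
  assumes "P \<noteq> {}"
  shows "finite {Q. fixed_copy P Q \<and> Q \<subseteq> board n}"
proof -
  obtain x y where "(x, y) \<in> P" using assms by auto
  let ?offsets = "{1 - x..int n - x} \<times> {1 - y..int n - y}"
  have "{Q. fixed_copy P Q \<and> Q \<subseteq> board n} \<subseteq> (\<lambda>(c, d). shift P c d) ` ?offsets"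
  proof
    fix Q assume "Q \<in> {Q. fixed_copy P Q \<and> Q \<subseteq> board n}"
    then obtain c d where Q: "Q = shift P c d" "Q \<subseteq> board n"
      unfolding fixed_copy_def by blast
    have "(x + c, y + d) \<in> Q"
      using \<open>(x, y) \<in> P\<close> unfolding Q(1) shift_def by force
    with Q(2) have "(c, d) \<in> ?offsets" unfolding board_def by auto
    with Q(1) show "Q \<in> (\<lambda>(c, d). shift P c d) ` ?offsets" by force
  qed
  then show ?thesis by (rule finite_subset) simp
qed

lemma finite_fixed_packings:
  assumes "P \<noteq> {}"
  shows "finite {S. fixed_packing P S}"
proof (rule finite_subset)
  show "{S. fixed_packing P S} \<subseteq> Pow {Q. fixed_copy P Q \<and> Q \<subseteq> board (card P)}"
    unfolding fixed_packing_def valid_arrangement_def by auto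
  show "finite (Pow {Q. fixed_copy P Q \<and> Q \<subseteq> board (card P)})"
    using finite_fixed_copies_in_board[OF assms] by simp
qed

lemma cp_fixed_eqI:
  assumes "P \<noteq> {}" "fixed_packing P S" "card S = k"
    and "\<And>S'. fixed_packing P S' \<Longrightarrow> k \<le> card S'"
  shows "cp_fixed P = k"
  unfolding cp_fixed_def
proof (rule Min_eqI)
  show "finite (card ` {S. fixed_packing P S})"
    using finite_fixed_packings[OF assms(1)] by simp
qed (use assms(2-4) in auto)

lemma mem_shift_T_shape:
  "(x, y) \<in> shift (T_shape a b) c d \<longleftrightarrow>
     (y = d + 1 \<and> c + 1 \<le> x \<and> x \<le> c + 2 * int a + 1) \<or>
     (x = c + int a + 1 \<and> d + 2 \<le> y \<and> y \<le> d + int b + 1)"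
proof
  assume "(x, y) \<in> shift (T_shape a b) c d"
  then show "(y = d + 1 \<and> c + 1 \<le> x \<and> x \<le> c + 2 * int a + 1) \<or>
     (x = c + int a + 1 \<and> d + 2 \<le> y \<and> y \<le> d + int b + 1)"
    unfolding shift_def T_shape_def by auto
next
  assume "(y = d + 1 \<and> c + 1 \<le> x \<and> x \<le> c + 2 * int a + 1) \<or>
     (x = c + int a + 1 \<and> d + 2 \<le> y \<and> y \<le> d + int b + 1)"
  then have "(x - c, y - d) \<in> T_shape a b" unfolding T_shape_def by auto
  then show "(x, y) \<in> shift (T_shape a b) c d" unfolding shift_def by force
qed

lemma card_T_shape: "card (T_shape a b) = 2 * a + b + 1"
proof -
  have T: "T_shape a b =
      (\<lambda>i. (i, 1)) ` {1..2 * int a + 1} \<union> (\<lambda>j. (int a + 1, j)) ` {2..int b + 1}"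
    unfolding T_shape_def by auto
  have "card (T_shape a b) =
      card ((\<lambda>i. (i, 1::int)) ` {1..2 * int a + 1}) +
      card ((\<lambda>j. (int a + 1, j)) ` {2..int b + 1})"
    unfolding T by (rule card_Un_disjoint) auto
  also have "\<dots> = card {1..2 * int a + 1} + card {2..int b + 1}"
    by (simp add: card_image inj_on_def)
  finally show ?thesis by simp
qed

lemma shift_T_shape_eq_iff:
  "shift (T_shape a b) c d = shift (T_shape a b) c' d' \<longleftrightarrow> c = c' \<and> d = d'"
proof
  assume eq: "shift (T_shape a b) c d = shift (T_shape a b) c' d'"
  have "(c + 1, d + 1) \<in> shift (T_shape a b) c' d'"
    unfolding eq[symmetric] by (simp add: mem_shift_T_shape)
  moreover have "(c' + 1, d' + 1) \<in> shift (T_shape a b) c d"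
    unfolding eq by (simp add: mem_shift_T_shape)
  ultimately show "c = c' \<and> d = d'" by (auto simp: mem_shift_T_shape)
qed simp

lemma shift_T_shape_subset_board_iff:
  "shift (T_shape a b) c d \<subseteq> board (card (T_shape a b)) \<longleftrightarrow>
     0 \<le> c \<and> c \<le> int b \<and> 0 \<le> d \<and> d \<le> 2 * int a"
  unfolding card_T_shape
proof
  assume sub: "shift (T_shape a b) c d \<subseteq> board (2 * a + b + 1)"
  have "(c + 1, d + 1) \<in> board (2 * a + b + 1)"
    "(c + 2 * int a + 1, d + 1) \<in> board (2 * a + b + 1)"
    "b > 0 \<Longrightarrow> (c + int a + 1, d + int b + 1) \<in> board (2 * a + b + 1)"
    using sub by (auto simp: mem_shift_T_shape)
  then show "0 \<le> c \<and> c \<le> int b \<and> 0 \<le> d \<and> d \<le> 2 * int a"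
    unfolding board_def by (cases "b = 0") auto
next
  assume "0 \<le> c \<and> c \<le> int b \<and> 0 \<le> d \<and> d \<le> 2 * int a"
  then show "shift (T_shape a b) c d \<subseteq> board (2 * a + b + 1)"
    unfolding board_def by (auto simp: mem_shift_T_shape)
qed

lemma shift_T_shape_overlap_imp_row_dist:
  assumes "shift (T_shape a b) c d \<inter> shift (T_shape a b) c' d' \<noteq> {}"
  shows "\<bar>d - d'\<bar> \<le> int b"
  using assms by (auto simp: mem_shift_T_shape)

lemma shift_T_shape_overlapI:
  assumes "\<bar>c - c'\<bar> \<le> int a" "\<bar>d - d'\<bar> \<le> int b"
  shows "shift (T_shape a b) c d \<inter> shift (T_shape a b) c' d' \<noteq> {}"
proof -
  consider "d = d'" | "d' < d" | "d < d'" by linarith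
  then show ?thesis
  proof cases
    case 1
    then have "(max c c' + 1, d + 1) \<in> shift (T_shape a b) c d \<inter> shift (T_shape a b) c' d'"
      using assms by (auto simp: mem_shift_T_shape)
    then show ?thesis by blast
  next
    case 2
    then have "(c' + int a + 1, d + 1) \<in> shift (T_shape a b) c d \<inter> shift (T_shape a b) c' d'"
      using assms by (auto simp: mem_shift_T_shape)
    then show ?thesis by blast
  next
    case 3
    then have "(c + int a + 1, d' + 1) \<in> shift (T_shape a b) c d \<inter> shift (T_shape a b) c' d'"
      using assms by (auto simp: mem_shift_T_shape)
    then show ?thesis by blast
  qed
qed

lemma fixed_packing_T_shape_card_ge:
  assumes "fixed_packing (T_shape a b) S"
  shows "2 * a div (2 * b + 1) + 1 \<le> card S"
proof -
  let ?T = "T_shape a b"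
  let ?copy = "\<lambda>(c, d). shift ?T c d"
  define offsets where "offsets = {(c, d). shift ?T c d \<in> S}"
  have S: "S = ?copy ` offsets"
  proof
    show "S \<subseteq> ?copy ` offsets"
    proof
      fix Q assume "Q \<in> S"
      moreover from this obtain c d where "Q = shift ?T c d"
        using assms unfolding fixed_packing_def fixed_copy_def by blast
      ultimately show "Q \<in> ?copy ` offsets" unfolding offsets_def by force
    qed
  qed (auto simp: offsets_def)
  have "offsets \<subseteq> {0..int b} \<times> {0..2 * int a}"
  proof
    fix p assume "p \<in> offsets"
    then obtain c d where "p = (c, d)" "shift ?T c d \<in> S" unfolding offsets_def by blast
    moreover have "\<forall>Q\<in>S. Q \<subseteq> board (card ?T)"
      using assms unfolding fixed_packing_def valid_arrangement_def by blast
    ultimately show "p \<in> {0..int b} \<times> {0..2 * int a}"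
      by (auto simp: shift_T_shape_subset_board_iff)
  qed
  then have "finite offsets" by (rule finite_subset) simp
  have "inj_on ?copy offsets" by (auto simp: inj_on_def shift_T_shape_eq_iff)
  then have card_S: "card S = card offsets" unfolding S by (rule card_image)
  have cover: "{0..2 * int a} \<subseteq> (\<Union>p\<in>offsets. {snd p - int b..snd p + int b})"
  proof
    fix d assume d: "d \<in> {0..2 * int a}"
    have "\<exists>R\<in>S. shift ?T 0 d \<inter> R \<noteq> {}"
    proof (rule fixed_packing_meets_copy[OF assms])
      show "fixed_copy ?T (shift ?T 0 d)" unfolding fixed_copy_def by blast
      show "shift ?T 0 d \<subseteq> board (card ?T)"
        using d by (simp add: shift_T_shape_subset_board_iff)
      have "(1, d + 1) \<in> shift ?T 0 d" by (simp add: mem_shift_T_shape)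
      then show "shift ?T 0 d \<noteq> {}" by blast
    qed
    then obtain c e where "(c, e) \<in> offsets" "shift ?T 0 d \<inter> shift ?T c e \<noteq> {}"
      unfolding S by auto
    then show "d \<in> (\<Union>p\<in>offsets. {snd p - int b..snd p + int b})"
      using shift_T_shape_overlap_imp_row_dist by force
  qed
  have "2 * a + 1 = card {0..2 * int a}" by simp
  also have "\<dots> \<le> card (\<Union>p\<in>offsets. {snd p - int b..snd p + int b})"
    using cover \<open>finite offsets\<close> by (intro card_mono) auto
  also have "\<dots> \<le> (\<Sum>p\<in>offsets. card {snd p - int b..snd p + int b})"
    using \<open>finite offsets\<close> by (rule card_UN_le)
  also have "\<dots> = card S * (2 * b + 1)"
    unfolding card_S by (simp add: nat_add_distrib nat_mult_distrib)
  finally show ?thesis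
    by (simp add: div_less_iff_less_mult Suc_le_eq)
qed

lemma fixed_packing_T_shape_exists:
  assumes "b \<le> 2 * a"
  obtains S where "fixed_packing (T_shape a b) S" "card S = 2 * a div (2 * b + 1) + 1"
proof -
  let ?T = "T_shape a b"
  \<comment> \<open>Every copy on the board has column offset within a of b div 2, since b \<le> 2a.\<close>
  let ?m = "int (b div 2)"
  obtain D where D: "D \<subseteq> {..2 * a}" "card D = 2 * a div (2 * b + 1) + 1"
    and separated: "\<And>d e. d \<in> D \<Longrightarrow> e \<in> D \<Longrightarrow> d < e \<Longrightarrow> d + b < e"
    and covering: "\<And>x. x \<le> 2 * a \<Longrightarrow> \<exists>d\<in>D. x \<le> d + b \<and> d \<le> x + b"
    using interval_has_separated_cover[of "2 * a" b] by blast
  define S where "S = (\<lambda>d. shift ?T ?m (int d)) ` D"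
  have "inj_on (\<lambda>d. shift ?T ?m (int d)) D"
    by (auto simp: inj_on_def shift_T_shape_eq_iff)
  then have "card S = card D" unfolding S_def by (rule card_image)
  have "fixed_packing ?T S"
  proof (rule fixed_packingI)
    show "fixed_copy ?T Q" if "Q \<in> S" for Q
      using that unfolding S_def fixed_copy_def by blast
    show "valid_arrangement (card ?T) S"
      unfolding valid_arrangement_def
    proof (intro conjI ballI impI)
      fix Q assume "Q \<in> S"
      then obtain d where "d \<in> D" "Q = shift ?T ?m (int d)" unfolding S_def by blast
      with D(1) show "Q \<subseteq> board (card ?T)"
        by (auto simp: shift_T_shape_subset_board_iff)
    next
      fix Q R assume "Q \<in> S" "R \<in> S" "Q \<noteq> R"
      then obtain d e where "d \<in> D" "e \<in> D" "d \<noteq> e"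
        and Q: "Q = shift ?T ?m (int d)" and R: "R = shift ?T ?m (int e)"
        unfolding S_def by auto
      then have "int b < \<bar>int d - int e\<bar>"
        using separated[of d e] separated[of e d] by (cases d e rule: linorder_cases) auto
      then show "Q \<inter> R = {}"
        unfolding Q R using shift_T_shape_overlap_imp_row_dist by force
    qed
    fix Q assume "fixed_copy ?T Q" "Q \<subseteq> board (card ?T)"
    then obtain c d where Q: "Q = shift ?T c d" and "0 \<le> c" "c \<le> int b" "0 \<le> d" "d \<le> 2 * int a"
      unfolding fixed_copy_def by (auto simp: shift_T_shape_subset_board_iff)
    obtain x where x: "d = int x" "x \<le> 2 * a"
      using \<open>0 \<le> d\<close> \<open>d \<le> 2 * int a\<close> by (metis nonneg_int_cases of_nat_le_iff of_nat_mult of_nat_numeral)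
    then obtain e where "e \<in> D" "x \<le> e + b" "e \<le> x + b"
      using covering by blast
    have "Q \<inter> shift ?T ?m (int e) \<noteq> {}"
      unfolding Q using assms \<open>0 \<le> c\<close> \<open>c \<le> int b\<close> x(1) \<open>x \<le> e + b\<close> \<open>e \<le> x + b\<close>
      by (intro shift_T_shape_overlapI) linarith+
    with \<open>e \<in> D\<close> show "\<exists>R\<in>S. Q \<inter> R \<noteq> {}" unfolding S_def by blast
  qed
  with \<open>card S = card D\<close> D(2) show thesis by (intro that) simp_all
qed

theorem theorem6:
  fixes a b :: nat
  assumes "0 < a" and "0 < b" and "b \<le> 2 * a"
  shows "card (T_shape a b) = 2 * a + b + 1 \<and>
         int (cp_fixed (T_shape a b)) = \<lceil>real (2 * a + 1) / real (2 * b + 1)\<rceil>"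
proof -
  have "T_shape a b \<noteq> {}"
    using card_T_shape[of a b] by auto
  obtain S where "fixed_packing (T_shape a b) S" "card S = 2 * a div (2 * b + 1) + 1"
    using fixed_packing_T_shape_exists[OF assms(3)] .
  then have "cp_fixed (T_shape a b) = 2 * a div (2 * b + 1) + 1"
    using \<open>T_shape a b \<noteq> {}\<close> fixed_packing_T_shape_card_ge by (intro cp_fixed_eqI)
  then show ?thesis
    using card_T_shape ceiling_of_nat_Suc_divide[of "2 * b + 1" "2 * a"] by simp
qed

end
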